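(* Let $S$ be a semigroup with finite $\mathcal{R}$-height, and let $A$ be a left ideal of $S$. Let $T$ be a right simple semigroup with no idempotent, disjoint from $S$, and let $U$ be the semigroup defined by the presentation with generating set $S\cup T$ and defining relations $ab=a\cdot b$, $cd=c\cdot d$ and $ac=c$ for all $a,b\in S$ and $c,d\in T$ (where $a\cdot b$ and $c\cdot d$ denote the products in $S$ and in $T$ respectively). Fix $c\in T$ and let $B=T^1(A\cup\{c\})$, a left ideal of $U$. Then $\mathrm{H}_{\mathcal{R}}(U)=\mathrm{H}_{\mathcal{R}}(S)+1$ and $\mathrm{H}_{\mathcal{R}}(B)=\mathrm{H}_{\mathcal{R}}(A)+2$.
   Context: A semigroup is right simple if it has no proper right ideals. A presentation $\langle X\mid R\rangle$ defines the quotient of the free semigroup on $X$ by the congruence generated by $R$. $T^1$ denotes $T$ with an identity adjoined. Green's preorder on a semigroup $M$: $u\leq_{\mathcal{R}} v$ iff $uM^1\subseteq vM^1$; $\mathcal{R}$ is the associated equivalence; the $\mathcal{R}$-height $\mathrm{H}_{\mathcal{R}}(M)$ is the supremum of cardinalities of chains in the poset of $\mathcal{R}$-classes. For $A$ and $B$ the $\mathcal{R}$-height is computed in $A$ and $B$ as semigroups in their own right. A left ideal is a non-empty subset $A$ with $SA\subseteq A$. *)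

theory Defs
  imports Main "HOL-Library.Extended_Nat"
begin

definition semigroup_on :: "'a set \<Rightarrow> ('a \<Rightarrow> 'a \<Rightarrow> 'a) \<Rightarrow> bool" where
  "semigroup_on M f \<longleftrightarrow>
     (\<forall>x\<in>M. \<forall>y\<in>M. f x y \<in> M) \<and>
     (\<forall>x\<in>M. \<forall>y\<in>M. \<forall>z\<in>M. f (f x y) z = f x (f y z))"

definition right_ideal :: "'a set \<Rightarrow> ('a \<Rightarrow> 'a \<Rightarrow> 'a) \<Rightarrow> 'a set \<Rightarrow> bool" where
  "right_ideal M f I \<longleftrightarrow> I \<noteq> {} \<and> I \<subseteq> M \<and> (\<forall>x\<in>I. \<forall>s\<in>M. f x s \<in> I)"

definition left_ideal :: "'a set \<Rightarrow> ('a \<Rightarrow> 'a \<Rightarrow> 'a) \<Rightarrow> 'a set \<Rightarrow> bool" where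
  "left_ideal M f I \<longleftrightarrow> I \<noteq> {} \<and> I \<subseteq> M \<and> (\<forall>s\<in>M. \<forall>x\<in>I. f s x \<in> I)"

definition right_simple :: "'a set \<Rightarrow> ('a \<Rightarrow> 'a \<Rightarrow> 'a) \<Rightarrow> bool" where
  "right_simple M f \<longleftrightarrow> (\<forall>I. right_ideal M f I \<longrightarrow> I = M)"

definition has_no_idempotent :: "'a set \<Rightarrow> ('a \<Rightarrow> 'a \<Rightarrow> 'a) \<Rightarrow> bool" where
  "has_no_idempotent M f \<longleftrightarrow> (\<forall>e\<in>M. f e e \<noteq> e)"

text \<open>u \<le>R v iff u M^1 \<subseteq> v M^1, i.e. u = v or u = v w for some w in M.\<close>
definition R_le :: "'a set \<Rightarrow> ('a \<Rightarrow> 'a \<Rightarrow> 'a) \<Rightarrow> 'a \<Rightarrow> 'a \<Rightarrow> bool" where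
  "R_le M f u v \<longleftrightarrow> u = v \<or> (\<exists>w\<in>M. u = f v w)"

definition R_class :: "'a set \<Rightarrow> ('a \<Rightarrow> 'a \<Rightarrow> 'a) \<Rightarrow> 'a \<Rightarrow> 'a set" where
  "R_class M f u = {v\<in>M. R_le M f u v \<and> R_le M f v u}"

definition R_classes :: "'a set \<Rightarrow> ('a \<Rightarrow> 'a \<Rightarrow> 'a) \<Rightarrow> 'a set set" where
  "R_classes M f = R_class M f ` M"

definition R_class_le :: "'a set \<Rightarrow> ('a \<Rightarrow> 'a \<Rightarrow> 'a) \<Rightarrow> 'a set \<Rightarrow> 'a set \<Rightarrow> bool" where
  "R_class_le M f X Y \<longleftrightarrow> (\<exists>x\<in>X. \<exists>y\<in>Y. R_le M f x y)"

definition R_chain :: "'a set \<Rightarrow> ('a \<Rightarrow> 'a \<Rightarrow> 'a) \<Rightarrow> 'a set set \<Rightarrow> bool" where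
  "R_chain M f C \<longleftrightarrow> C \<subseteq> R_classes M f \<and>
     (\<forall>X\<in>C. \<forall>Y\<in>C. R_class_le M f X Y \<or> R_class_le M f Y X)"

text \<open>R-height: supremum of the cardinalities of chains of R-classes (as an extended
  natural; infinite chains contain arbitrarily large finite subchains, so it suffices
  to take the supremum over finite chains).\<close>
definition R_height :: "'a set \<Rightarrow> ('a \<Rightarrow> 'a \<Rightarrow> 'a) \<Rightarrow> enat" where
  "R_height M f = Sup {enat (card C) | C. finite C \<and> R_chain M f C}"

text \<open>Generators: S \<union> T realised disjointly as Inl ` S \<union> Inr ` T.
  Elements of the free semigroup: nonempty words over the generators.\<close>

definition gen_words :: "'a set \<Rightarrow> 'b set \<Rightarrow> ('a + 'b) list set" where
  "gen_words S T = {w. w \<noteq> [] \<and> set w \<subseteq> S <+> T}"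

inductive U_rel :: "'a set \<Rightarrow> ('a \<Rightarrow> 'a \<Rightarrow> 'a) \<Rightarrow> 'b set \<Rightarrow> ('b \<Rightarrow> 'b \<Rightarrow> 'b)
    \<Rightarrow> ('a + 'b) list \<Rightarrow> ('a + 'b) list \<Rightarrow> bool"
  for S mS T mT where
  relS: "a \<in> S \<Longrightarrow> b \<in> S \<Longrightarrow> U_rel S mS T mT [Inl a, Inl b] [Inl (mS a b)]"
| relT: "c \<in> T \<Longrightarrow> d \<in> T \<Longrightarrow> U_rel S mS T mT [Inr c, Inr d] [Inr (mT c d)]"
| relST: "a \<in> S \<Longrightarrow> c \<in> T \<Longrightarrow> U_rel S mS T mT [Inl a, Inr c] [Inr c]"

inductive U_cong :: "'a set \<Rightarrow> ('a \<Rightarrow> 'a \<Rightarrow> 'a) \<Rightarrow> 'b set \<Rightarrow> ('b \<Rightarrow> 'b \<Rightarrow> 'b)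
    \<Rightarrow> ('a + 'b) list \<Rightarrow> ('a + 'b) list \<Rightarrow> bool"
  for S mS T mT where
  cong_refl: "w \<in> gen_words S T \<Longrightarrow> U_cong S mS T mT w w"
| cong_step: "p @ l @ q \<in> gen_words S T \<Longrightarrow> U_rel S mS T mT l r \<Longrightarrow>
     U_cong S mS T mT (p @ l @ q) (p @ r @ q)"
| cong_sym: "U_cong S mS T mT u v \<Longrightarrow> U_cong S mS T mT v u"
| cong_trans: "U_cong S mS T mT u v \<Longrightarrow> U_cong S mS T mT v w \<Longrightarrow> U_cong S mS T mT u w"

definition U_class :: "'a set \<Rightarrow> ('a \<Rightarrow> 'a \<Rightarrow> 'a) \<Rightarrow> 'b set \<Rightarrow> ('b \<Rightarrow> 'b \<Rightarrow> 'b)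
    \<Rightarrow> ('a + 'b) list \<Rightarrow> ('a + 'b) list set" where
  "U_class S mS T mT w = {v. U_cong S mS T mT w v}"

definition U_carrier :: "'a set \<Rightarrow> ('a \<Rightarrow> 'a \<Rightarrow> 'a) \<Rightarrow> 'b set \<Rightarrow> ('b \<Rightarrow> 'b \<Rightarrow> 'b)
    \<Rightarrow> ('a + 'b) list set set" where
  "U_carrier S mS T mT = U_class S mS T mT ` gen_words S T"

definition U_mult :: "'a set \<Rightarrow> ('a \<Rightarrow> 'a \<Rightarrow> 'a) \<Rightarrow> 'b set \<Rightarrow> ('b \<Rightarrow> 'b \<Rightarrow> 'b)
    \<Rightarrow> ('a + 'b) list set \<Rightarrow> ('a + 'b) list set \<Rightarrow> ('a + 'b) list set" where
  "U_mult S mS T mT X Y = U_class S mS T mT ((SOME x. x \<in> X) @ (SOME y. y \<in> Y))"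

text \<open>B = T^1 (A \<union> {c}) inside U: the elements x and t x with t in T, x in A \<union> {c}
  (A and c being identified with the images of the corresponding generators).\<close>
definition B_set :: "'a set \<Rightarrow> ('a \<Rightarrow> 'a \<Rightarrow> 'a) \<Rightarrow> 'b set \<Rightarrow> ('b \<Rightarrow> 'b \<Rightarrow> 'b)
    \<Rightarrow> 'a set \<Rightarrow> 'b \<Rightarrow> ('a + 'b) list set set" where
  "B_set S mS T mT A c =
     {U_class S mS T mT [x] | x. x \<in> Inl ` A \<union> {Inr c}} \<union>
     {U_class S mS T mT [Inr t, x] | t x. t \<in> T \<and> x \<in> Inl ` A \<union> {Inr c}}"

end

theory Submission
  imports Defs
begin

text \<open>Every element of U has a unique normal form a, t or t a (a in S, t in T): a letter of S
  in front of a letter of T is absorbed by the relation ac = c. In this normal-form model the copy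
  of S keeps its own R-order, and every element x involving T satisfies x = a x for all a in S,
  so it lies strictly R-below all of S; hence the R-height is that of S plus the height of the
  elements involving T. By right simplicity of T these form a single R-class of U. Inside
  B = T^1(A \<union> {c}) the copy of A plays the role of S, and the elements t a, t c (t in T) again
  form one R-class; but c lies strictly above it, because c = t c is impossible: in a right
  simple semigroup without idempotents t x = x has no solution (t = x u would make u x
  idempotent).\<close>

section \<open>Heights of preorders\<close>

text \<open>Pairwise comparable, pairwise inequivalent elements: representatives of a chain of classes.\<close>
definition preorder_chain :: "'a set \<Rightarrow> ('a \<Rightarrow> 'a \<Rightarrow> bool) \<Rightarrow> 'a set \<Rightarrow> bool" where
  "preorder_chain M le E \<longleftrightarrow> E \<subseteq> M \<and> (\<forall>x\<in>E. \<forall>y\<in>E. le x y \<or> le y x) \<and>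
     (\<forall>x\<in>E. \<forall>y\<in>E. le x y \<and> le y x \<longrightarrow> x = y)"

definition preorder_height :: "'a set \<Rightarrow> ('a \<Rightarrow> 'a \<Rightarrow> bool) \<Rightarrow> enat" where
  "preorder_height M le = Sup {enat (card E) | E. finite E \<and> preorder_chain M le E}"

lemma preorder_height_ge:
  "finite E \<Longrightarrow> preorder_chain M le E \<Longrightarrow> enat (card E) \<le> preorder_height M le"
  unfolding preorder_height_def by (rule Sup_upper) blast

lemma preorder_height_le:
  "(\<And>E. finite E \<Longrightarrow> preorder_chain M le E \<Longrightarrow> enat (card E) \<le> h) \<Longrightarrow> preorder_height M le \<le> h"
  unfolding preorder_height_def by (rule Sup_least) blast

lemma preorder_height_mono: "N \<subseteq> M \<Longrightarrow> preorder_height N le \<le> preorder_height M le"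
  by (rule preorder_height_le, rule preorder_height_ge) (auto simp: preorder_chain_def)

lemma preorder_height_attained:
  assumes "preorder_height M le = enat k"
  obtains E where "finite E" "preorder_chain M le E" "card E = k"
proof -
  let ?H = "{enat (card E) | E. finite E \<and> preorder_chain M le E}"
  have "?H \<noteq> {}"
    by (auto simp: preorder_chain_def)
  then have "enat k \<in> ?H"
    using assms Max_in[of ?H] by (auto simp: preorder_height_def Sup_enat_def split: if_splits)
  then show ?thesis using that by auto
qed

lemma preorder_height_cong:
  assumes "\<And>x y. x \<in> M \<Longrightarrow> y \<in> M \<Longrightarrow> le x y \<longleftrightarrow> le' x y"
  shows "preorder_height M le = preorder_height M le'"
proof -
  have "preorder_chain M le E \<longleftrightarrow> preorder_chain M le' E" for E
  proof -
    have "E \<subseteq> M \<Longrightarrow> \<forall>x\<in>E. \<forall>y\<in>E. le x y \<longleftrightarrow> le' x y"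
      using assms by blast
    then show ?thesis
      unfolding preorder_chain_def by blast
  qed
  then show ?thesis
    by (simp add: preorder_height_def)
qed

lemma preorder_height_single_class:
  assumes "X \<noteq> {}" and "\<And>x y. x \<in> X \<Longrightarrow> y \<in> X \<Longrightarrow> le x y"
  shows "preorder_height X le = 1"
proof (rule antisym)
  show "preorder_height X le \<le> 1"
  proof (rule preorder_height_le)
    fix E assume E: "finite E" "preorder_chain X le E"
    have "x = y" if "x \<in> E" "y \<in> E" for x y
      using E(2) that assms(2) unfolding preorder_chain_def by (meson subsetD)
    then have "card E \<le> Suc 0"
      using card_le_Suc0_iff_eq[OF E(1)] by blast
    then show "enat (card E) \<le> 1" by (simp add: one_enat_def)
  qed
  obtain x where "x \<in> X" using assms(1) by blast
  then have "preorder_chain X le {x}"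
    using assms(2) by (auto simp: preorder_chain_def)
  then show "1 \<le> preorder_height X le"
    using preorder_height_ge[of "{x}"] by (simp add: one_enat_def)
qed

lemma preorder_chain_Un:
  assumes EN: "preorder_chain N le EN" and EL: "preorder_chain L le EL"
    and below: "\<And>p n. p \<in> EL \<Longrightarrow> n \<in> EN \<Longrightarrow> le p n \<and> \<not> le n p"
  shows "preorder_chain (N \<union> L) le (EN \<union> EL)"
  unfolding preorder_chain_def
proof (intro conjI ballI impI)
  show "EN \<union> EL \<subseteq> N \<union> L"
    using EN EL by (auto simp: preorder_chain_def)
next
  fix x y assume "x \<in> EN \<union> EL" "y \<in> EN \<union> EL"
  moreover have "le x y \<or> le y x" if "x \<in> EN \<and> y \<in> EN \<or> x \<in> EL \<and> y \<in> EL"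
    using EN EL that unfolding preorder_chain_def by blast
  ultimately show "le x y \<or> le y x"
    using below by blast
next
  fix x y assume "x \<in> EN \<union> EL" "y \<in> EN \<union> EL" "le x y \<and> le y x"
  moreover have "x = y" if "x \<in> EN \<and> y \<in> EN \<or> x \<in> EL \<and> y \<in> EL" "le x y" "le y x"
    using EN EL that unfolding preorder_chain_def by blast
  ultimately show "x = y"
    using below by blast
qed

lemma preorder_height_stack:
  assumes "N \<subseteq> M" and below: "\<And>p n. p \<in> M - N \<Longrightarrow> n \<in> N \<Longrightarrow> le p n \<and> \<not> le n p"
  shows "preorder_height M le = preorder_height N le + preorder_height (M - N) le"
proof (rule antisym)
  show "preorder_height M le \<le> preorder_height N le + preorder_height (M - N) le"
  proof (rule preorder_height_le)
    fix E assume "finite E" and E: "preorder_chain M le E"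
    have "preorder_chain N le (E \<inter> N)" "preorder_chain (M - N) le (E - N)"
      using E by (auto simp: preorder_chain_def)
    then have "enat (card (E \<inter> N)) + enat (card (E - N)) \<le> preorder_height N le + preorder_height (M - N) le"
      using \<open>finite E\<close> by (intro add_mono preorder_height_ge) auto
    then show "enat (card E) \<le> preorder_height N le + preorder_height (M - N) le"
      using card_Int_Diff[OF \<open>finite E\<close>, of N] by simp
  qed
next
  show "preorder_height N le + preorder_height (M - N) le \<le> preorder_height M le"
  proof (cases "preorder_height M le")
    case (enat m)
    have "preorder_height N le \<le> enat m" "preorder_height (M - N) le \<le> enat m"
      using preorder_height_mono[of N M le] preorder_height_mono[of "M - N" M le] enat assms(1)
      by auto
    then obtain k l where k: "preorder_height N le = enat k" and l: "preorder_height (M - N) le = enat l"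
      by (meson enat_ile)
    obtain EN where EN: "finite EN" "preorder_chain N le EN" "card EN = k"
      using k by (rule preorder_height_attained)
    obtain EL where EL: "finite EL" "preorder_chain (M - N) le EL" "card EL = l"
      using l by (rule preorder_height_attained)
    have "preorder_chain (N \<union> (M - N)) le (EN \<union> EL)"
      by (rule preorder_chain_Un[OF EN(2) EL(2)])
        (use below EN(2) EL(2) in \<open>auto simp: preorder_chain_def\<close>)
    then have "preorder_chain M le (EN \<union> EL)"
      using assms(1) by (simp add: Un_absorb1)
    moreover have "card (EN \<union> EL) = k + l"
      using EN EL by (subst card_Un_disjoint) (auto simp: preorder_chain_def)
    ultimately show ?thesis
      using preorder_height_ge[of "EN \<union> EL" M le] EN(1) EL(1) k l by simp
  qed simp
qed

lemma preorder_height_image: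
  assumes inj: "inj_on \<phi> M" and le: "\<And>x y. x \<in> M \<Longrightarrow> y \<in> M \<Longrightarrow> le' (\<phi> x) (\<phi> y) \<longleftrightarrow> le x y"
  shows "preorder_height (\<phi> ` M) le' = preorder_height M le"
proof -
  have chain: "preorder_chain (\<phi> ` M) le' (\<phi> ` E) \<longleftrightarrow> preorder_chain M le E" if "E \<subseteq> M" for E
  proof -
    have "\<forall>x\<in>E. \<forall>y\<in>E. \<phi> x = \<phi> y \<longleftrightarrow> x = y"
      using inj that unfolding inj_on_def by blast
    moreover have "\<forall>x\<in>E. \<forall>y\<in>E. le' (\<phi> x) (\<phi> y) \<longleftrightarrow> le x y"
      using le that by blast
    ultimately show ?thesis
      using that unfolding preorder_chain_def by auto
  qed
  have "{enat (card E') | E'. finite E' \<and> preorder_chain (\<phi> ` M) le' E'} =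
        {enat (card E) | E. finite E \<and> preorder_chain M le E}"
  proof (intro equalityI subsetI; elim CollectE exE conjE)
    fix k E' assume k: "k = enat (card E')" and "finite E'" and E': "preorder_chain (\<phi> ` M) le' E'"
    then obtain E where E: "E \<subseteq> M" "inj_on \<phi> E" "E' = \<phi> ` E"
      unfolding preorder_chain_def by (meson subset_image_inj)
    have "finite E" "card E' = card E"
      using E \<open>finite E'\<close> by (simp_all add: finite_image_iff card_image)
    moreover have "preorder_chain M le E"
      using E E' chain by simp
    ultimately show "k \<in> {enat (card E) | E. finite E \<and> preorder_chain M le E}"
      using k by auto
  next
    fix k E assume k: "k = enat (card E)" and "finite E" and E: "preorder_chain M le E"
    then have "E \<subseteq> M"
      by (simp add: preorder_chain_def)
    then have "card (\<phi> ` E) = card E"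
      using inj by (meson card_image inj_on_subset)
    moreover have "preorder_chain (\<phi> ` M) le' (\<phi> ` E)"
      using E chain \<open>E \<subseteq> M\<close> by simp
    ultimately show "k \<in> {enat (card E') | E'. finite E' \<and> preorder_chain (\<phi> ` M) le' E'}"
      using k \<open>finite E\<close> by (intro CollectI exI[of _ "\<phi> ` E"]) auto
  qed
  then show ?thesis unfolding preorder_height_def by (rule arg_cong)
qed

section \<open>Green's R-preorder\<close>

lemma R_le_refl: "R_le M f u u"
  by (simp add: R_le_def)

lemma R_le_trans:
  assumes M: "semigroup_on M f" and "z \<in> M" and uv: "R_le M f u v" and vz: "R_le M f v z"
  shows "R_le M f u z"
proof -
  have "u = f z (f w' w)" "f w' w \<in> M"
    if "w \<in> M" "u = f v w" "w' \<in> M" "v = f z w'" for w w'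
    using M that \<open>z \<in> M\<close> by (simp_all add: semigroup_on_def)
  then show ?thesis
    using uv vz unfolding R_le_def by metis
qed

context
  fixes M :: "'a set" and f :: "'a \<Rightarrow> 'a \<Rightarrow> 'a"
  assumes M: "semigroup_on M f"
begin

lemma R_class_eq_iff:
  assumes "u \<in> M" "v \<in> M"
  shows "R_class M f u = R_class M f v \<longleftrightarrow> R_le M f u v \<and> R_le M f v u"
proof
  assume "R_class M f u = R_class M f v"
  moreover have "v \<in> R_class M f v"
    using \<open>v \<in> M\<close> by (simp add: R_class_def R_le_refl)
  ultimately have "v \<in> R_class M f u"
    by simp
  then show "R_le M f u v \<and> R_le M f v u"
    by (simp add: R_class_def)
next
  assume "R_le M f u v \<and> R_le M f v u"
  then have "R_le M f u x \<longleftrightarrow> R_le M f v x" "R_le M f x u \<longleftrightarrow> R_le M f x v" if "x \<in> M" for x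
    using R_le_trans[OF M] assms that by meson+
  then show "R_class M f u = R_class M f v"
    unfolding R_class_def by auto
qed

lemma R_class_le_iff:
  assumes "u \<in> M" "v \<in> M"
  shows "R_class_le M f (R_class M f u) (R_class M f v) \<longleftrightarrow> R_le M f u v"
proof
  assume "R_class_le M f (R_class M f u) (R_class M f v)"
  then obtain x y where "x \<in> M" "R_le M f u x" "R_le M f x y" "R_le M f y v"
    unfolding R_class_le_def R_class_def by blast
  then show "R_le M f u v"
    using R_le_trans[OF M] \<open>v \<in> M\<close> by meson
next
  assume "R_le M f u v"
  then show "R_class_le M f (R_class M f u) (R_class M f v)"
    using assms unfolding R_class_le_def R_class_def by (blast intro: R_le_refl)
qed

lemma R_chain_image_iff:
  assumes "E \<subseteq> M" and inj: "inj_on (R_class M f) E"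
  shows "R_chain M f (R_class M f ` E) \<longleftrightarrow> preorder_chain M (R_le M f) E"
proof -
  have le: "\<forall>x\<in>E. \<forall>y\<in>E. R_class_le M f (R_class M f x) (R_class M f y) \<longleftrightarrow> R_le M f x y"
    using R_class_le_iff \<open>E \<subseteq> M\<close> by blast
  have "\<forall>x\<in>E. \<forall>y\<in>E. R_le M f x y \<and> R_le M f y x \<longrightarrow> x = y"
    using inj R_class_eq_iff \<open>E \<subseteq> M\<close> unfolding inj_on_def by blast
  moreover have "R_class M f ` E \<subseteq> R_classes M f"
    using \<open>E \<subseteq> M\<close> by (auto simp: R_classes_def)
  ultimately show ?thesis
    using \<open>E \<subseteq> M\<close> le unfolding R_chain_def preorder_chain_def by auto
qed

lemma inj_on_R_class_chain:
  "preorder_chain M (R_le M f) E \<Longrightarrow> inj_on (R_class M f) E"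
  unfolding preorder_chain_def inj_on_def using R_class_eq_iff by blast

lemma R_height_eq_preorder_height: "R_height M f = preorder_height M (R_le M f)"
proof -
  have "{enat (card C) | C. finite C \<and> R_chain M f C} =
        {enat (card E) | E. finite E \<and> preorder_chain M (R_le M f) E}"
  proof (intro equalityI subsetI; elim CollectE exE conjE)
    fix k C assume k: "k = enat (card C)" and "finite C" and C: "R_chain M f C"
    then obtain E where E: "E \<subseteq> M" "inj_on (R_class M f) E" "C = R_class M f ` E"
      unfolding R_chain_def R_classes_def by (meson subset_image_inj)
    have "finite E" "card C = card E"
      using E \<open>finite C\<close> by (simp_all add: finite_image_iff card_image)
    moreover have "preorder_chain M (R_le M f) E"
      using E C R_chain_image_iff by simp
    ultimately show "k \<in> {enat (card E) | E. finite E \<and> preorder_chain M (R_le M f) E}"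
      using k by auto
  next
    fix k E assume k: "k = enat (card E)" and "finite E" and E: "preorder_chain M (R_le M f) E"
    then have "E \<subseteq> M" "inj_on (R_class M f) E"
      using inj_on_R_class_chain by (simp_all add: preorder_chain_def)
    then have "card (R_class M f ` E) = card E" "R_chain M f (R_class M f ` E)"
      using E R_chain_image_iff by (simp_all add: card_image)
    then show "k \<in> {enat (card C) | C. finite C \<and> R_chain M f C}"
      using k \<open>finite E\<close> by (intro CollectI exI[of _ "R_class M f ` E"]) auto
  qed
  then show ?thesis
    unfolding R_height_def preorder_height_def by (rule arg_cong)
qed

end

lemma R_height_image:
  assumes M: "semigroup_on M f" and inj: "inj_on \<psi> M"
    and hom: "\<And>x y. x \<in> M \<Longrightarrow> y \<in> M \<Longrightarrow> g (\<psi> x) (\<psi> y) = \<psi> (f x y)"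
  shows "semigroup_on (\<psi> ` M) g" and "R_height (\<psi> ` M) g = R_height M f"
proof -
  have closed: "f x y \<in> M" and assoc: "f (f x y) z = f x (f y z)"
    if "x \<in> M" "y \<in> M" "z \<in> M" for x y z
    using M that by (simp_all add: semigroup_on_def)
  show M': "semigroup_on (\<psi> ` M) g"
    unfolding semigroup_on_def using closed assoc hom by auto
  have "R_le (\<psi> ` M) g (\<psi> x) (\<psi> y) \<longleftrightarrow> R_le M f x y" if "x \<in> M" "y \<in> M" for x y
  proof -
    have "R_le (\<psi> ` M) g (\<psi> x) (\<psi> y) \<longleftrightarrow> \<psi> x = \<psi> y \<or> (\<exists>w\<in>M. \<psi> x = \<psi> (f y w))"
      unfolding R_le_def using hom that by auto
    also have "\<dots> \<longleftrightarrow> R_le M f x y"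
      using inj that closed unfolding inj_on_def R_le_def by (metis (no_types, lifting))
    finally show ?thesis .
  qed
  then show "R_height (\<psi> ` M) g = R_height M f"
    using preorder_height_image[OF inj]
    by (simp add: R_height_eq_preorder_height[OF M] R_height_eq_preorder_height[OF M'])
qed

section \<open>Normal forms for U\<close>

text \<open>NS a, NT t and NTS t a stand for the elements a, t and t a of U.\<close>
datatype ('a, 'b) nf = NS 'a | NT 'b | NTS 'b 'a

fun nf_mult :: "('a \<Rightarrow> 'a \<Rightarrow> 'a) \<Rightarrow> ('b \<Rightarrow> 'b \<Rightarrow> 'b) \<Rightarrow> ('a, 'b) nf \<Rightarrow> ('a, 'b) nf \<Rightarrow> ('a, 'b) nf" where
  "nf_mult mS mT (NS a) (NS b) = NS (mS a b)"
| "nf_mult mS mT (NS a) y = y"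
| "nf_mult mS mT (NT t) (NS a) = NTS t a"
| "nf_mult mS mT (NT t) (NT u) = NT (mT t u)"
| "nf_mult mS mT (NT t) (NTS u a) = NTS (mT t u) a"
| "nf_mult mS mT (NTS t a) (NS b) = NTS t (mS a b)"
| "nf_mult mS mT (NTS t a) (NT u) = NT (mT t u)"
| "nf_mult mS mT (NTS t a) (NTS u b) = NTS (mT t u) b"

fun nf_in :: "'a set \<Rightarrow> 'b set \<Rightarrow> ('a, 'b) nf \<Rightarrow> bool" where
  "nf_in S T (NS a) \<longleftrightarrow> a \<in> S"
| "nf_in S T (NT t) \<longleftrightarrow> t \<in> T"
| "nf_in S T (NTS t a) \<longleftrightarrow> t \<in> T \<and> a \<in> S"

fun nf_of_gen :: "'a + 'b \<Rightarrow> ('a, 'b) nf" where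
  "nf_of_gen (Inl a) = NS a"
| "nf_of_gen (Inr t) = NT t"

fun nf_of_word :: "('a \<Rightarrow> 'a \<Rightarrow> 'a) \<Rightarrow> ('b \<Rightarrow> 'b \<Rightarrow> 'b) \<Rightarrow> ('a + 'b) list \<Rightarrow> ('a, 'b) nf" where
  "nf_of_word mS mT [x] = nf_of_gen x"
| "nf_of_word mS mT (x # y # w) = nf_mult mS mT (nf_of_gen x) (nf_of_word mS mT (y # w))"

fun nf_word :: "('a, 'b) nf \<Rightarrow> ('a + 'b) list" where
  "nf_word (NS a) = [Inl a]"
| "nf_word (NT t) = [Inr t]"
| "nf_word (NTS t a) = [Inr t, Inl a]"

lemma nf_of_word_Cons: "w \<noteq> [] \<Longrightarrow> nf_of_word mS mT (x # w) = nf_mult mS mT (nf_of_gen x) (nf_of_word mS mT w)"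
  by (cases w) auto

lemma nf_of_word_nf_word [simp]: "nf_of_word mS mT (nf_word n) = n"
  by (cases n) auto

locale U_presentation =
  fixes S :: "'a set" and mS :: "'a \<Rightarrow> 'a \<Rightarrow> 'a"
    and T :: "'b set" and mT :: "'b \<Rightarrow> 'b \<Rightarrow> 'b"
  assumes semigroup_S: "semigroup_on S mS" and semigroup_T: "semigroup_on T mT"
begin

abbreviation NF :: "('a, 'b) nf set" where "NF \<equiv> {x. nf_in S T x}"
abbreviation mult :: "('a, 'b) nf \<Rightarrow> ('a, 'b) nf \<Rightarrow> ('a, 'b) nf" where "mult \<equiv> nf_mult mS mT"

lemma S_closed: "a \<in> S \<Longrightarrow> b \<in> S \<Longrightarrow> mS a b \<in> S"
  and S_assoc: "a \<in> S \<Longrightarrow> b \<in> S \<Longrightarrow> c \<in> S \<Longrightarrow> mS (mS a b) c = mS a (mS b c)"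
  and T_closed: "t \<in> T \<Longrightarrow> u \<in> T \<Longrightarrow> mT t u \<in> T"
  and T_assoc: "t \<in> T \<Longrightarrow> u \<in> T \<Longrightarrow> v \<in> T \<Longrightarrow> mT (mT t u) v = mT t (mT u v)"
  using semigroup_S semigroup_T by (simp_all add: semigroup_on_def)

lemma nf_in_mult: "nf_in S T x \<Longrightarrow> nf_in S T y \<Longrightarrow> nf_in S T (mult x y)"
  by (cases x; cases y) (auto simp: S_closed T_closed)

lemma nf_mult_assoc:
  "nf_in S T x \<Longrightarrow> nf_in S T y \<Longrightarrow> nf_in S T z \<Longrightarrow> mult (mult x y) z = mult x (mult y z)"
  by (cases x; cases y; cases z) (auto simp: S_assoc T_assoc)

lemma semigroup_NF: "semigroup_on NF mult"
  unfolding semigroup_on_def using nf_in_mult nf_mult_assoc by auto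

lemma nf_of_word_in: "w \<in> gen_words S T \<Longrightarrow> nf_in S T (nf_of_word mS mT w)"
proof (induction w)
  case (Cons x w)
  then show ?case
    by (cases "w = []") (auto simp: gen_words_def nf_of_word_Cons nf_in_mult)
qed (simp add: gen_words_def)

lemma nf_of_word_append:
  assumes "u \<in> gen_words S T" "v \<in> gen_words S T"
  shows "nf_of_word mS mT (u @ v) = mult (nf_of_word mS mT u) (nf_of_word mS mT v)"
  using assms(1)
proof (induction u)
  case (Cons x u)
  show ?case
  proof (cases "u = []")
    case False
    then have "u \<in> gen_words S T" "nf_in S T (nf_of_gen x)"
      using Cons.prems by (auto simp: gen_words_def)
    then show ?thesis
      using Cons.IH False assms(2) nf_mult_assoc nf_of_word_in
      by (simp add: nf_of_word_Cons gen_words_def)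
  qed (use assms(2) in \<open>simp add: nf_of_word_Cons gen_words_def\<close>)
qed (simp add: gen_words_def)

lemma nf_word_in_gen_words: "nf_in S T n \<Longrightarrow> nf_word n \<in> gen_words S T"
  by (cases n) (auto simp: gen_words_def)

lemma U_rel_nf_of_word:
  "U_rel S mS T mT l r \<Longrightarrow> l \<in> gen_words S T \<and> r \<in> gen_words S T \<and> nf_of_word mS mT l = nf_of_word mS mT r"
  by (induction rule: U_rel.induct) (auto simp: gen_words_def S_closed T_closed)

lemma nf_of_word_replace:
  assumes "l \<in> gen_words S T" "r \<in> gen_words S T" "nf_of_word mS mT l = nf_of_word mS mT r"
    and "set p \<subseteq> S <+> T" "set q \<subseteq> S <+> T"
  shows "nf_of_word mS mT (p @ l @ q) = nf_of_word mS mT (p @ r @ q)"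
  using assms(4)
proof (induction p)
  case Nil
  show ?case
  proof (cases "q = []")
    case False
    then have "q \<in> gen_words S T"
      using assms(5) by (simp add: gen_words_def)
    then show ?thesis
      using assms(1-3) by (simp add: nf_of_word_append)
  qed (simp add: assms(3))
next
  case (Cons x p)
  then show ?case
    using assms(1,2) by (simp add: nf_of_word_Cons gen_words_def)
qed

lemma U_cong_nf_of_word:
  "U_cong S mS T mT u v \<Longrightarrow> u \<in> gen_words S T \<and> v \<in> gen_words S T \<and> nf_of_word mS mT u = nf_of_word mS mT v"
proof (induction rule: U_cong.induct)
  case (cong_step p l q r)
  have l_r: "l \<in> gen_words S T" "r \<in> gen_words S T" "nf_of_word mS mT l = nf_of_word mS mT r"
    using U_rel_nf_of_word[OF cong_step(2)] by auto
  have p_q: "set p \<subseteq> S <+> T" "set q \<subseteq> S <+> T"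
    using cong_step(1) by (auto simp: gen_words_def)
  have "p @ r @ q \<in> gen_words S T"
    using l_r(2) p_q by (auto simp: gen_words_def)
  then show ?case
    using cong_step(1) nf_of_word_replace[OF l_r p_q] by blast
qed auto

lemma U_cong_context:
  assumes "U_cong S mS T mT u v" "set p \<subseteq> S <+> T" "set q \<subseteq> S <+> T"
  shows "U_cong S mS T mT (p @ u @ q) (p @ v @ q)"
  using assms
proof (induction arbitrary: p q rule: U_cong.induct)
  case (cong_refl w)
  then show ?case
    by (intro U_cong.cong_refl) (auto simp: gen_words_def)
next
  case (cong_step p' l q' r)
  then have "U_cong S mS T mT ((p @ p') @ l @ (q' @ q)) ((p @ p') @ r @ (q' @ q))"
    by (intro U_cong.cong_step) (auto simp: gen_words_def)
  then show ?case
    by simp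
qed (blast intro: U_cong.cong_sym U_cong.cong_trans)+

lemma U_cong_of_rel:
  assumes "U_rel S mS T mT l r" "set q \<subseteq> S <+> T"
  shows "U_cong S mS T mT (l @ q) (r @ q)"
  using U_cong.cong_step[of "[]" l q, OF _ assms(1)] U_rel_nf_of_word[OF assms(1)] assms(2)
  by (simp add: gen_words_def)

lemma U_cong_Cons_nf_word:
  assumes "x \<in> S <+> T" "nf_in S T n"
  shows "U_cong S mS T mT (x # nf_word n) (nf_word (mult (nf_of_gen x) n))"
proof -
  have rel: "U_cong S mS T mT l r" if "U_rel S mS T mT l r" for l r
    using U_cong_of_rel[OF that, of "[]"] by simp
  have rel_Inl: "U_cong S mS T mT (l @ [Inl b]) (r @ [Inl b])" if "U_rel S mS T mT l r" "b \<in> S" for l r b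
    using U_cong_of_rel[OF that(1), of "[Inl b]"] that(2) by (simp add: InlI)
  show ?thesis
  proof (cases x)
    case (Inl a)
    then have "a \<in> S"
      using assms(1) by auto
    then show ?thesis
      using Inl assms(2) rel[OF U_rel.relS] rel[OF U_rel.relST] rel_Inl[OF U_rel.relST]
      by (cases n) simp_all
  next
    case (Inr t)
    then have "t \<in> T"
      using assms(1) by auto
    then show ?thesis
      using Inr assms(2) rel[OF U_rel.relT] rel_Inl[OF U_rel.relT] nf_word_in_gen_words[of "NTS t a" for a]
      by (cases n) (simp_all add: U_cong.cong_refl)
  qed
qed

lemma U_cong_nf_word: "w \<in> gen_words S T \<Longrightarrow> U_cong S mS T mT w (nf_word (nf_of_word mS mT w))"
proof (induction w)
  case (Cons x w)
  show ?case
  proof (cases "w = []")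
    case True
    then show ?thesis
      using Cons.prems by (cases x) (auto intro: U_cong.cong_refl simp: gen_words_def)
  next
    case False
    then have w: "w \<in> gen_words S T" and x: "x \<in> S <+> T"
      using Cons.prems by (auto simp: gen_words_def)
    have "U_cong S mS T mT ([x] @ w @ []) ([x] @ nf_word (nf_of_word mS mT w) @ [])"
      using U_cong_context[OF Cons.IH[OF w], of "[x]" "[]"] x by simp
    moreover have "U_cong S mS T mT (x # nf_word (nf_of_word mS mT w)) (nf_word (nf_of_word mS mT (x # w)))"
      using U_cong_Cons_nf_word[OF x nf_of_word_in[OF w]] False by (simp add: nf_of_word_Cons)
    ultimately show ?thesis
      by (auto intro: U_cong.cong_trans)
  qed
qed (simp add: gen_words_def)

lemma U_cong_iff:
  assumes "u \<in> gen_words S T"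
  shows "U_cong S mS T mT u v \<longleftrightarrow> v \<in> gen_words S T \<and> nf_of_word mS mT v = nf_of_word mS mT u"
proof
  assume "U_cong S mS T mT u v"
  then show "v \<in> gen_words S T \<and> nf_of_word mS mT v = nf_of_word mS mT u"
    using U_cong_nf_of_word by metis
next
  assume "v \<in> gen_words S T \<and> nf_of_word mS mT v = nf_of_word mS mT u"
  then show "U_cong S mS T mT u v"
    using U_cong_nf_word[OF assms] U_cong_nf_word[of v]
    by (metis U_cong.cong_sym U_cong.cong_trans)
qed

definition nf_class :: "('a, 'b) nf \<Rightarrow> ('a + 'b) list set" where
  "nf_class n = {w \<in> gen_words S T. nf_of_word mS mT w = n}"

lemma U_class_eq_nf_class: "w \<in> gen_words S T \<Longrightarrow> U_class S mS T mT w = nf_class (nf_of_word mS mT w)"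
  unfolding U_class_def nf_class_def using U_cong_iff by auto

lemma nf_word_in_nf_class: "nf_in S T n \<Longrightarrow> nf_word n \<in> nf_class n"
  by (simp add: nf_class_def nf_word_in_gen_words)

lemma inj_on_nf_class: "inj_on nf_class NF"
proof (rule inj_onI)
  fix x y assume "x \<in> NF" "nf_class x = nf_class y"
  then have "nf_word x \<in> nf_class y"
    using nf_word_in_nf_class by auto
  then show "x = y"
    by (simp add: nf_class_def)
qed

lemma U_carrier_eq: "U_carrier S mS T mT = nf_class ` NF"
proof -
  have "U_carrier S mS T mT = (\<lambda>w. nf_class (nf_of_word mS mT w)) ` gen_words S T"
    unfolding U_carrier_def using U_class_eq_nf_class by simp
  also have "\<dots> = nf_class ` NF"
  proof
    show "(\<lambda>w. nf_class (nf_of_word mS mT w)) ` gen_words S T \<subseteq> nf_class ` NF"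
      using nf_of_word_in by auto
    have "nf_class n = nf_class (nf_of_word mS mT (nf_word n))" for n
      by simp
    then show "nf_class ` NF \<subseteq> (\<lambda>w. nf_class (nf_of_word mS mT w)) ` gen_words S T"
      using nf_word_in_gen_words by blast
  qed
  finally show ?thesis .
qed

lemma U_mult_nf_class:
  assumes "nf_in S T x" "nf_in S T y"
  shows "U_mult S mS T mT (nf_class x) (nf_class y) = nf_class (mult x y)"
proof -
  have "(SOME u. u \<in> nf_class x) \<in> nf_class x" "(SOME v. v \<in> nf_class y) \<in> nf_class y"
    using assms nf_word_in_nf_class by (meson someI)+
  then show ?thesis
    unfolding U_mult_def
    by (simp add: U_class_eq_nf_class nf_of_word_append nf_class_def gen_words_def)
qed

lemma R_height_nf_class_image:
  assumes "M \<subseteq> NF" "semigroup_on M mult"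
  shows "R_height (nf_class ` M) (U_mult S mS T mT) = R_height M mult"
  using R_height_image(2)[OF assms(2), of nf_class] inj_on_subset[OF inj_on_nf_class assms(1)]
    U_mult_nf_class assms(1) by blast

section \<open>R-heights of U and of B\<close>

lemma NS_mult_absorb: "p \<notin> range NS \<Longrightarrow> mult (NS a) p = p"
  by (cases p) auto

lemma mult_notin_range_NS: "p \<notin> range NS \<Longrightarrow> mult p w \<notin> range NS"
  by (cases p; cases w) auto

lemma R_le_below_NS:
  assumes "p \<in> M" "NS a \<in> M" "p \<notin> range NS"
  shows "R_le M mult p (NS a) \<and> \<not> R_le M mult (NS a) p"
  using assms NS_mult_absorb mult_notin_range_NS unfolding R_le_def by (metis rangeI)

lemma R_le_NS_restrict:
  assumes "M \<inter> range NS = NS ` X" "x \<in> NS ` X" "y \<in> NS ` X"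
  shows "R_le M mult x y \<longleftrightarrow> R_le (NS ` X) mult x y"
proof -
  have "w \<in> NS ` X" if "w \<in> M" "x = mult y w" for w
    using that assms NS_mult_absorb by (cases w) auto
  then show ?thesis
    using assms(1) unfolding R_le_def by blast
qed

lemma R_height_NS_stack:
  assumes M: "semigroup_on M mult" and X: "semigroup_on X mS" and "M \<inter> range NS = NS ` X"
  shows "R_height M mult = R_height X mS + preorder_height (M - NS ` X) (R_le M mult)"
proof -
  have NS_X: "semigroup_on (NS ` X) mult" "R_height (NS ` X) mult = R_height X mS"
    using R_height_image[OF X, of NS mult] by (simp_all add: inj_on_def)
  have "R_height M mult = preorder_height M (R_le M mult)"
    by (rule R_height_eq_preorder_height[OF M])
  also have "\<dots> = preorder_height (NS ` X) (R_le M mult) + preorder_height (M - NS ` X) (R_le M mult)"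
  proof (rule preorder_height_stack)
    show "NS ` X \<subseteq> M"
      using assms(3) by blast
    fix p n :: "('a, 'b) nf" assume "p \<in> M - NS ` X" "n \<in> NS ` X"
    moreover from this have "p \<notin> range NS" "n \<in> M"
      using assms(3) by blast+
    ultimately show "R_le M mult p n \<and> \<not> R_le M mult n p"
      using R_le_below_NS by blast
  qed
  also have "preorder_height (NS ` X) (R_le M mult) = preorder_height (NS ` X) (R_le (NS ` X) mult)"
    using R_le_NS_restrict[OF assms(3)] by (rule preorder_height_cong)
  also have "\<dots> = R_height X mS"
    using R_height_eq_preorder_height[OF NS_X(1)] NS_X(2) by simp
  finally show ?thesis .
qed

end

lemma right_simple_divisible:
  assumes "semigroup_on T m" "right_simple T m" "u \<in> T" "t \<in> T"
  shows "\<exists>w\<in>T. t = m u w"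
proof -
  have "right_ideal T m {m u w | w. w \<in> T}"
    using assms(1,3) unfolding right_ideal_def semigroup_on_def by force
  then have "{m u w | w. w \<in> T} = T"
    using assms(2) by (simp add: right_simple_def)
  then show ?thesis
    using \<open>t \<in> T\<close> by blast
qed

lemma right_simple_no_idempotent_mult_neq:
  assumes T: "semigroup_on T m" "right_simple T m" and "has_no_idempotent T m"
    and "t \<in> T" "x \<in> T"
  shows "m t x \<noteq> x"
proof
  assume fixed: "m t x = x"
  obtain u where u: "u \<in> T" "t = m x u"
    using right_simple_divisible[OF T \<open>x \<in> T\<close> \<open>t \<in> T\<close>] by blast
  have "m (m u x) (m u x) = m u (m (m x u) x)"
    using T(1) u \<open>x \<in> T\<close> by (simp add: semigroup_on_def)
  also have "\<dots> = m u x"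
    using fixed u by simp
  finally have "m (m u x) (m u x) = m u x" .
  moreover have "m u x \<in> T"
    using T(1) u \<open>x \<in> T\<close> by (simp add: semigroup_on_def)
  ultimately show False
    using \<open>has_no_idempotent T m\<close> unfolding has_no_idempotent_def by blast
qed

locale U_right_simple = U_presentation +
  assumes right_simple_T: "right_simple T mT" and no_idempotent_T: "has_no_idempotent T mT"
begin

lemma T_divisible: "u \<in> T \<Longrightarrow> t \<in> T \<Longrightarrow> \<exists>w\<in>T. t = mT u w"
  using right_simple_divisible[OF semigroup_T right_simple_T] .

lemma T_mult_neq: "t \<in> T \<Longrightarrow> x \<in> T \<Longrightarrow> mT t x \<noteq> x"
  using right_simple_no_idempotent_mult_neq[OF semigroup_T right_simple_T no_idempotent_T] .

lemma R_le_NF_T_part: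
  assumes x: "x \<in> NF - range NS" and y: "y \<in> NF - range NS"
  shows "R_le NF mult x y"
proof -
  obtain u where u: "u \<in> T" "\<And>w. mult y (NT w) = NT (mT u w)" "\<And>w a. mult y (NTS w a) = NTS (mT u w) a"
    using y by (cases y) auto
  show ?thesis
  proof (cases x)
    case (NT t)
    then obtain w where "w \<in> T" "t = mT u w"
      using x T_divisible[OF u(1)] by auto
    moreover from this have "x = mult y (NT w)"
      using NT u(2) by simp
    ultimately show ?thesis
      unfolding R_le_def by force
  next
    case (NTS t a)
    then obtain w where "w \<in> T" "t = mT u w"
      using x T_divisible[OF u(1)] by auto
    moreover from this have "x = mult y (NTS w a)"
      using NTS u(3) by simp
    moreover have "NTS w a \<in> NF"
      using NTS x \<open>w \<in> T\<close> by simp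
    ultimately show ?thesis
      unfolding R_le_def by blast
  qed (use x in auto)
qed

lemma R_height_NF:
  assumes "T \<noteq> {}"
  shows "R_height NF mult = R_height S mS + 1"
proof -
  obtain t where "t \<in> T"
    using assms by blast
  then have "NT t \<in> NF - range NS"
    by auto
  then have "preorder_height (NF - range NS) (R_le NF mult) = 1"
    using R_le_NF_T_part by (intro preorder_height_single_class) blast+
  moreover have "NF - NS ` S = NF - range NS" "NF \<inter> range NS = NS ` S"
    by auto
  ultimately show ?thesis
    using R_height_NS_stack[OF semigroup_NF semigroup_S] by simp
qed

lemma R_height_U_carrier:
  assumes "T \<noteq> {}"
  shows "R_height (U_carrier S mS T mT) (U_mult S mS T mT) = R_height S mS + 1"
  using U_carrier_eq R_height_nf_class_image[OF subset_refl semigroup_NF] R_height_NF[OF assms]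
  by simp

end

locale U_left_ideal = U_right_simple +
  fixes A :: "'a set" and c :: 'b
  assumes left_ideal_A: "left_ideal S mS A" and c_in_T: "c \<in> T"
begin

definition Ac_nf :: "('a, 'b) nf set" where
  "Ac_nf = insert (NT c) (NS ` A)"

definition T_Ac_nf :: "('a, 'b) nf set" where
  "T_Ac_nf = {mult (NT t) g | t g. t \<in> T \<and> g \<in> Ac_nf}"

definition B_nf :: "('a, 'b) nf set" where
  "B_nf = Ac_nf \<union> T_Ac_nf"

lemma A_subset_S: "A \<subseteq> S"
  and A_closed: "a \<in> S \<Longrightarrow> b \<in> A \<Longrightarrow> mS a b \<in> A"
  using left_ideal_A by (auto simp: left_ideal_def)

lemma semigroup_A: "semigroup_on A mS"
  using A_subset_S A_closed S_assoc unfolding semigroup_on_def by blast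

lemma T_Ac_nf_NT: "t \<in> T \<Longrightarrow> NT (mT t c) \<in> T_Ac_nf"
  unfolding T_Ac_nf_def Ac_nf_def by force

lemma T_Ac_nf_NTS:
  assumes "t \<in> T" "a \<in> A"
  shows "NTS t a \<in> T_Ac_nf"
proof -
  have "NTS t a = mult (NT t) (NS a)" "NS a \<in> Ac_nf"
    using assms(2) by (simp_all add: Ac_nf_def)
  then show ?thesis
    unfolding T_Ac_nf_def using assms(1) by blast
qed

lemma T_Ac_nf_cases:
  assumes "x \<in> T_Ac_nf"
  obtains (NT) t where "t \<in> T" "x = NT (mT t c)" | (NTS) t a where "t \<in> T" "a \<in> A" "x = NTS t a"
  using assms unfolding T_Ac_nf_def Ac_nf_def by auto

lemma B_nf_cases:
  assumes "x \<in> B_nf"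
  obtains (NS) a where "a \<in> A" "x = NS a" | (c) "x = NT c" | (T_Ac) "x \<in> T_Ac_nf"
  using assms unfolding B_nf_def Ac_nf_def by blast

lemma B_nf_iff: "x \<in> B_nf \<longleftrightarrow> x \<in> NS ` A \<or> x \<in> insert (NT c) T_Ac_nf"
  unfolding B_nf_def Ac_nf_def by blast

lemma B_nf_subset_NF: "B_nf \<subseteq> NF"
proof
  fix x assume "x \<in> B_nf"
  then show "x \<in> NF"
  proof (cases rule: B_nf_cases)
    case T_Ac
    then show ?thesis
      using A_subset_S c_in_T T_closed by (cases rule: T_Ac_nf_cases) auto
  qed (use A_subset_S c_in_T in auto)
qed

lemma B_nf_Int_range_NS: "B_nf \<inter> range NS = NS ` A"
  by (auto simp: B_nf_iff elim: T_Ac_nf_cases)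

lemma NT_c_notin_T_Ac_nf: "NT c \<notin> T_Ac_nf"
proof
  assume "NT c \<in> T_Ac_nf"
  then show False
    using T_mult_neq[OF _ c_in_T] by (cases rule: T_Ac_nf_cases) (auto simp: eq_commute[of c])
qed

lemma mult_in_T_Ac_nf:
  assumes "x \<in> insert (NT c) T_Ac_nf" "w \<in> B_nf"
  shows "mult x w \<in> T_Ac_nf"
proof -
  obtain u where u: "u \<in> T" and x: "x = NT (mT u c) \<or> x = NT c \<and> u = c \<or> (\<exists>b\<in>A. x = NTS u b)"
    using assms(1) c_in_T by (auto elim: T_Ac_nf_cases)
  have assoc: "mT t (mT v c) = mT (mT t v) c" if "t \<in> T" "v \<in> T" for t v
    using T_assoc c_in_T that by simp
  from assms(2) show ?thesis
  proof (cases rule: B_nf_cases)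
    case (NS a)
    then show ?thesis
      using x u c_in_T A_closed[OF subsetD[OF A_subset_S]] by (auto intro!: T_Ac_nf_NTS T_closed)
  next
    case c
    then show ?thesis
      using x u c_in_T by (auto simp: assoc intro!: T_Ac_nf_NT T_closed)
  next
    case T_Ac
    then show ?thesis
      using x u c_in_T
      by (cases rule: T_Ac_nf_cases) (auto simp: assoc T_closed intro!: T_Ac_nf_NT T_Ac_nf_NTS)
  qed
qed

lemma semigroup_B_nf: "semigroup_on B_nf mult"
proof -
  have "mult x w \<in> B_nf" if "x \<in> B_nf" "w \<in> B_nf" for x w
  proof (cases "x \<in> NS ` A")
    case True
    then obtain a where a: "a \<in> A" "x = NS a"
      by blast
    show ?thesis
    proof (cases "w \<in> range NS")
      case True
      then obtain b where "b \<in> A" "w = NS b"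
        using \<open>w \<in> B_nf\<close> B_nf_Int_range_NS by blast
      then show ?thesis
        using a A_closed A_subset_S by (auto simp: B_nf_iff)
    qed (use a \<open>w \<in> B_nf\<close> NS_mult_absorb in simp)
  next
    case False
    with that have "x \<in> insert (NT c) T_Ac_nf"
      by (simp add: B_nf_iff)
    then show ?thesis
      using mult_in_T_Ac_nf that(2) by (simp add: B_nf_iff)
  qed
  then show ?thesis
    using nf_mult_assoc B_nf_subset_NF unfolding semigroup_on_def by blast
qed

definition B_words :: "('a + 'b) list set" where
  "B_words = {[x] | x. x \<in> Inl ` A \<union> {Inr c}} \<union> {[Inr t, x] | t x. t \<in> T \<and> x \<in> Inl ` A \<union> {Inr c}}"

lemma nf_of_word_B_words: "nf_of_word mS mT ` B_words = B_nf"
proof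
  show "nf_of_word mS mT ` B_words \<subseteq> B_nf"
    by (auto simp: B_words_def B_nf_iff T_Ac_nf_NT T_Ac_nf_NTS)
next
  have W: "a \<in> A \<Longrightarrow> [Inl a] \<in> B_words" "[Inr c] \<in> B_words"
    "t \<in> T \<Longrightarrow> a \<in> A \<Longrightarrow> [Inr t, Inl a] \<in> B_words" "t \<in> T \<Longrightarrow> [Inr t, Inr c] \<in> B_words" for a t
    by (auto simp: B_words_def)
  show "B_nf \<subseteq> nf_of_word mS mT ` B_words"
  proof
    fix x assume "x \<in> B_nf"
    then show "x \<in> nf_of_word mS mT ` B_words"
    proof (cases rule: B_nf_cases)
      case (NS a)
      then show ?thesis
        using W(1) by (intro image_eqI[of _ _ "[Inl a]"]) auto
    next
      case c
      then show ?thesis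
        using W(2) by (intro image_eqI[of _ _ "[Inr c]"]) auto
    next
      case T_Ac
      then show ?thesis
      proof (cases rule: T_Ac_nf_cases)
        case (NT t)
        then show ?thesis
          using W(4) by (intro image_eqI[of _ _ "[Inr t, Inr c]"]) auto
      next
        case (NTS t a)
        then show ?thesis
          using W(3) by (intro image_eqI[of _ _ "[Inr t, Inl a]"]) auto
      qed
    qed
  qed
qed

lemma B_set_eq: "B_set S mS T mT A c = nf_class ` B_nf"
proof -
  have "B_words \<subseteq> gen_words S T"
    using A_subset_S c_in_T by (auto simp: B_words_def gen_words_def)
  then have "U_class S mS T mT ` B_words = (\<lambda>w. nf_class (nf_of_word mS mT w)) ` B_words"
    by (intro image_cong) (auto simp: U_class_eq_nf_class)
  moreover have "B_set S mS T mT A c = U_class S mS T mT ` B_words"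
    unfolding B_set_def B_words_def by auto
  ultimately have "B_set S mS T mT A c = nf_class ` nf_of_word mS mT ` B_words"
    by (simp add: image_image)
  then show ?thesis
    by (simp add: nf_of_word_B_words)
qed

lemma R_le_T_Ac_nf:
  assumes y: "y \<in> insert (NT c) T_Ac_nf" and x: "x \<in> T_Ac_nf"
  shows "R_le B_nf mult x y"
proof -
  have "\<exists>u\<in>T. y = NT u \<or> (\<exists>b. y = NTS u b)"
    using y c_in_T T_closed by (auto elim!: T_Ac_nf_cases)
  then obtain u where u: "u \<in> T" "\<And>w. mult y (NT w) = NT (mT u w)" "\<And>w a. mult y (NTS w a) = NTS (mT u w) a"
    by auto
  from x show ?thesis
  proof (cases rule: T_Ac_nf_cases)
    case (NT t)
    then obtain w where "w \<in> T" "t = mT u w"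
      using T_divisible[OF u(1)] by blast
    then have "x = mult y (NT (mT w c))" "NT (mT w c) \<in> B_nf"
      using NT u c_in_T T_assoc by (simp_all add: B_nf_iff T_Ac_nf_NT)
    then show ?thesis
      unfolding R_le_def by blast
  next
    case (NTS t a)
    then obtain w where "w \<in> T" "t = mT u w"
      using T_divisible[OF u(1)] by blast
    then have "x = mult y (NTS w a)" "NTS w a \<in> B_nf"
      using NTS u by (simp_all add: B_nf_iff T_Ac_nf_NTS)
    then show ?thesis
      unfolding R_le_def by blast
  qed
qed

lemma preorder_height_B_nf_T_part: "preorder_height (B_nf - NS ` A) (R_le B_nf mult) = 2"
proof -
  have "B_nf - NS ` A = insert (NT c) T_Ac_nf"
    using B_nf_Int_range_NS by (auto simp: B_nf_iff elim: T_Ac_nf_cases)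
  moreover have "preorder_height (insert (NT c) T_Ac_nf) (R_le B_nf mult) =
      preorder_height {NT c} (R_le B_nf mult) + preorder_height T_Ac_nf (R_le B_nf mult)"
  proof -
    have "\<not> R_le B_nf mult (NT c) p" if "p \<in> T_Ac_nf" for p
      using that NT_c_notin_T_Ac_nf mult_in_T_Ac_nf unfolding R_le_def by auto
    then show ?thesis
      using preorder_height_stack[of "{NT c}" "insert (NT c) T_Ac_nf"] NT_c_notin_T_Ac_nf R_le_T_Ac_nf
      by (simp add: insert_Diff_if)
  qed
  moreover have "preorder_height {NT c} (R_le B_nf mult) = 1"
    by (rule preorder_height_single_class) (simp_all add: R_le_refl)
  moreover have "preorder_height T_Ac_nf (R_le B_nf mult) = 1"
    using T_Ac_nf_NT[OF c_in_T] R_le_T_Ac_nf by (intro preorder_height_single_class) blast+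
  ultimately show ?thesis
    by (simp add: one_add_one)
qed

lemma R_height_B_set: "R_height (B_set S mS T mT A c) (U_mult S mS T mT) = R_height A mS + 2"
proof -
  have "R_height B_nf mult = R_height A mS + 2"
    using R_height_NS_stack[OF semigroup_B_nf semigroup_A B_nf_Int_range_NS]
      preorder_height_B_nf_T_part by simp
  then show ?thesis
    using B_set_eq R_height_nf_class_image[OF B_nf_subset_NF semigroup_B_nf] by simp
qed

end

theorem theorem4p8:
  fixes S :: "'a set" and mS :: "'a \<Rightarrow> 'a \<Rightarrow> 'a"
    and T :: "'b set" and mT :: "'b \<Rightarrow> 'b \<Rightarrow> 'b"
    and A :: "'a set" and c :: 'b
  assumes "semigroup_on S mS"
    and "R_height S mS \<noteq> \<infinity>"
    and "left_ideal S mS A"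
    and "semigroup_on T mT"
    and "right_simple T mT"
    and "has_no_idempotent T mT"
    and "c \<in> T"
  shows "R_height (U_carrier S mS T mT) (U_mult S mS T mT) = R_height S mS + 1 \<and>
         R_height (B_set S mS T mT A c) (U_mult S mS T mT) = R_height A mS + 2"
proof -
  interpret U_left_ideal S mS T mT A c
    using assms by unfold_locales
  have "T \<noteq> {}"
    using \<open>c \<in> T\<close> by blast
  then show ?thesis
    using R_height_U_carrier R_height_B_set by simp
qed

end
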